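(* Consider the control system $\dot x=f(x,u)$, where $f\colon\mathcal{X}\times\mathcal{U}\to\mathbb{R}^n$ is continuous on a neighborhood $\mathcal{X}\times\mathcal{U}\subseteq\mathbb{R}^n\times\mathbb{R}^m$ of the origin with $f(0,0)=0$, let $d$ be a nonnegative function on a neighborhood of $0\in\mathbb{R}^n$, and suppose the system is locally asymptotically stabilizable and $u$ is a stabilizing feedback with $\|u(x)\|\le d(x)$ for all sufficiently small $\|x\|$. Write $F_u(x):=f(x,u(x))$, $$g_f(r):=\Gamma_0\big(f(\mathbb{B}_r(0,0))\big),\quad g_{F_u}(r):=\Gamma_0\big(F_u(\mathbb{B}_r(0))\big),\quad h(r):=\sup_{y\in\mathbb{B}_r(0)}\|F_u^{-1}(y)\|.$$ Then $$g_{F_u}\big(h(r)\big)\ \le\ g_f\left(\sqrt{\|d\|^2_{\mathbb{B}_{h(r)}(0)}+h(r)^2}\right)\quad\text{for all sufficiently small } r>0.$$ Moreover, $g_{F_u}(h(r))\ge r$ for all sufficiently small $r>0$, so that this condition implies $r\le g_f\big(\sqrt{\|d\|^2_{\mathbb{B}_{h(r)}(0)}+h(r)^2}\big)$ for all sufficiently small $r>0$.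
   Context: $\mathbb{B}_r(z)$ denotes the open ball of radius $r$ centered at $z$; on $\mathbb{R}^n\times\mathbb{R}^m$ the norm is $\|(x,u)\|=\sqrt{\|x\|^2+\|u\|^2}$. The inradius of a set $K$ at $z^*$ is $\Gamma_{z^*}(K)=\sup\{\rho\ge0:\mathbb{B}_\rho(z^* )\subseteq K\}$; $\|d\|_{\mathbb{B}_\rho(0)}:=\sup_{x\in\mathbb{B}_\rho(0)}d(x)$. A stabilizing feedback is a map $u\colon\mathcal{O}\to\mathcal{U}$ on a neighborhood $\mathcal{O}$ of the origin with $u(0)=0$ such that the origin is a locally asymptotically stable equilibrium of $\dot x=f(x,u(x))$, with $x\mapsto f(x,u(x))$ continuous and $\dot x=f(x,u(x))$ having a unique solution for all $t$ from every initial condition near the origin; the system is locally asymptotically stabilizable if such $u$ exists. For such $u$, $F_u$ restricted to a suitable neighborhood of the origin is a homeomorphism onto a neighborhood of the origin, and $F_u^{-1}$ denotes this local inverse. *)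

theory Defs
  imports "HOL-Analysis.Analysis" "HOL-Library.Extended_Real"
begin

text \<open>Inradius of K at z: sup of radii rho >= 0 with ball z rho contained in K
  (extended-real valued, so that it is always well defined).\<close>
definition inradius :: "'a::real_normed_vector \<Rightarrow> 'a set \<Rightarrow> ereal" where
  "inradius z K = (SUP \<rho> \<in> {\<rho>::real. \<rho> \<ge> 0 \<and> ball z \<rho> \<subseteq> K}. ereal \<rho>)"

definition eball0 :: "'a::real_normed_vector set \<Rightarrow> ereal \<Rightarrow> 'a set" where
  "eball0 S R = {x \<in> S. ereal (norm x) < R}"

definition is_solution :: "('a::real_normed_vector \<Rightarrow> 'a) \<Rightarrow> 'a set \<Rightarrow> 'a \<Rightarrow> (real \<Rightarrow> 'a) \<Rightarrow> bool" where
  "is_solution F Om x0 x \<longleftrightarrow> x 0 = x0 \<and>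
     (\<forall>t\<ge>0. x t \<in> Om \<and> (x has_vector_derivative F (x t)) (at t within {0..}))"

definition unique_solution :: "('a::real_normed_vector \<Rightarrow> 'a) \<Rightarrow> 'a set \<Rightarrow> 'a \<Rightarrow> bool" where
  "unique_solution F Om x0 \<longleftrightarrow> (\<exists>x. is_solution F Om x0 x \<and>
     (\<forall>y. is_solution F Om x0 y \<longrightarrow> (\<forall>t\<ge>0. y t = x t)))"

definition locally_asymptotically_stable :: "('a::real_normed_vector \<Rightarrow> 'a) \<Rightarrow> 'a set \<Rightarrow> bool" where
  "locally_asymptotically_stable F Om \<longleftrightarrow> F 0 = 0 \<and>
     (\<forall>\<epsilon>>0. \<exists>\<delta>>0. \<forall>x0\<in>ball 0 \<delta>. \<forall>x. is_solution F Om x0 x \<longrightarrow> (\<forall>t\<ge>0. norm (x t) < \<epsilon>)) \<and>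
     (\<exists>\<eta>>0. \<forall>x0\<in>ball 0 \<eta>. \<forall>x. is_solution F Om x0 x \<longrightarrow> (x \<longlongrightarrow> 0) at_top)"

definition stabilizing_feedback ::
  "('a::real_normed_vector \<times> 'b::real_normed_vector \<Rightarrow> 'a) \<Rightarrow> 'a set \<Rightarrow> 'b set \<Rightarrow> 'a set \<Rightarrow> ('a \<Rightarrow> 'b) \<Rightarrow> bool" where
  "stabilizing_feedback f X U Om u \<longleftrightarrow>
     open Om \<and> 0 \<in> Om \<and> Om \<subseteq> X \<and> u ` Om \<subseteq> U \<and> u 0 = 0 \<and>
     continuous_on Om (\<lambda>x. f (x, u x)) \<and>
     (\<exists>\<delta>>0. \<forall>x0\<in>ball 0 \<delta>. unique_solution (\<lambda>x. f (x, u x)) Om x0) \<and>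
     locally_asymptotically_stable (\<lambda>x. f (x, u x)) Om"

text \<open>sqrt(a^2 + b^2) for extended reals (negative values / -infinity, i.e. sups over
  empty sets, are treated as 0; an infinite argument gives infinity).\<close>
definition esqrt_sum :: "ereal \<Rightarrow> ereal \<Rightarrow> ereal" where
  "esqrt_sum a b = (if a = \<infinity> \<or> b = \<infinity> then \<infinity>
     else ereal (sqrt ((real_of_ereal (max a 0))\<^sup>2 + (real_of_ereal (max b 0))\<^sup>2)))"

end

theory Submission
  imports Defs
begin

text \<open>The local inverse \<open>g\<close> of \<open>F\<^sub>u\<close> maps \<open>\<bbbB>\<^sub>r(0)\<close> onto an open set, and an open set has
  no point of maximal norm; hence \<open>g(\<bbbB>\<^sub>r(0))\<close> lies in the open ball of radius
  \<open>h(r) = sup \<parallel>g\<parallel>\<close>, i.e. \<open>\<bbbB>\<^sub>r(0) \<subseteq> F\<^sub>u(\<bbbB>\<^bsub>h(r)\<^esub>(0))\<close>, which gives \<open>g\<^sub>F\<^sub>u(h(r)) \<ge> r\<close>. By continuity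
  of \<open>g\<close>, \<open>h(r)\<close> is small for small \<open>r\<close>, so every \<open>x\<close> with \<open>\<parallel>x\<parallel> < h(r)\<close> has
  \<open>\<parallel>u x\<parallel> \<le> d x \<le> \<parallel>d\<parallel>\<close> and thus \<open>\<parallel>(x, u x)\<parallel> < (\<parallel>d\<parallel>\<^sup>2 + h(r)\<^sup>2)\<^bsup>1/2\<^esup>\<close>. Therefore
  \<open>F\<^sub>u(\<bbbB>\<^bsub>h(r)\<^esub>(0))\<close> is contained in the corresponding image of \<open>f\<close>, and the inradius is
  monotone.\<close>

lemma inradius_mono: "K \<subseteq> L \<Longrightarrow> inradius z K \<le> inradius z L"
  unfolding inradius_def by (rule SUP_subset_mono) auto

lemma ereal_le_inradius: "0 \<le> r \<Longrightarrow> ball z r \<subseteq> K \<Longrightarrow> ereal r \<le> inradius z K"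
  unfolding inradius_def by (rule SUP_upper) auto

lemma open_exists_norm_greater:
  fixes S :: "'a::{real_normed_vector, perfect_space} set"
  assumes "open S" "x \<in> S"
  obtains x' where "x' \<in> S" "norm x < norm x'"
proof -
  obtain e where e: "e > 0" "ball x e \<subseteq> S"
    using assms open_contains_ball by blast
  show thesis
  proof (cases "x = 0")
    case True
    obtain v :: 'a where "norm v = e / 2"
      using vector_choose_size[of "e / 2"] e by auto
    then have "v \<in> ball x e" "norm x < norm v"
      using e True by auto
    with e show thesis
      using that by blast
  next
    case False
    define x' where "x' = (1 + e / (2 * norm x)) *\<^sub>R x"
    have "0 < 1 + e / (2 * norm x)"
      using False e by (simp add: add_pos_pos)
    then have "norm x < norm x'"
      using False e by (simp add: x'_def distrib_right)
    have "x - x' = - ((e / (2 * norm x)) *\<^sub>R x)"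
      by (simp add: x'_def algebra_simps)
    then have "x' \<in> ball x e"
      using False e by (simp add: dist_norm)
    with e \<open>norm x < norm x'\<close> show thesis
      using that by blast
  qed
qed

lemma norm_less_SUP_norm_open:
  fixes S :: "'a::{real_normed_vector, perfect_space} set"
  assumes "open S" "x \<in> S"
  shows "ereal (norm x) < (SUP y \<in> S. ereal (norm y))"
proof -
  obtain x' where "x' \<in> S" "norm x < norm x'"
    using open_exists_norm_greater assms .
  then have "ereal (norm x) < ereal (norm x')"
    by simp
  also have "\<dots> \<le> (SUP y \<in> S. ereal (norm y))"
    using \<open>x' \<in> S\<close> by (rule SUP_upper)
  finally show ?thesis .
qed

lemma open_subset_image_eball0_SUP_norm:
  fixes F g :: "'a::{real_normed_vector, perfect_space} \<Rightarrow> 'a"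
  assumes hom: "homeomorphism W V F g" and "open W" "W \<subseteq> Om" "open B" "B \<subseteq> V"
  shows "B \<subseteq> F ` eball0 Om (SUP y \<in> B. ereal (norm (g y)))"
proof
  fix y assume "y \<in> B"
  have "openin (top_of_set W) (g ` B)"
    using homeomorphism_imp_open_map[OF homeomorphism_sym[THEN iffD1, OF hom]]
      \<open>open B\<close> \<open>B \<subseteq> V\<close> by (simp add: open_subset)
  then have "open (g ` B)"
    using \<open>open W\<close> openin_open_trans by blast
  then have "ereal (norm (g y)) < (SUP y \<in> B. ereal (norm (g y)))"
    using norm_less_SUP_norm_open[of "g ` B" "g y"] \<open>y \<in> B\<close> by (simp add: image_image)
  moreover have "y = F (g y)" "g y \<in> W"
    using hom \<open>y \<in> B\<close> \<open>B \<subseteq> V\<close> unfolding homeomorphism_def by auto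
  ultimately show "y \<in> F ` eball0 Om (SUP y \<in> B. ereal (norm (g y)))"
    using \<open>W \<subseteq> Om\<close> unfolding eball0_def by force
qed

lemma norm_Pair_less_esqrt_sum:
  assumes "ereal (norm x) < h" "ereal (norm v) \<le> a"
  shows "ereal (norm (x, v)) < esqrt_sum a h"
proof (cases "a = \<infinity> \<or> h = \<infinity>")
  case True
  then show ?thesis
    by (auto simp: esqrt_sum_def)
next
  case False
  then obtain ar hr where ar: "a = ereal ar" "norm v \<le> ar" and hr: "h = ereal hr" "norm x < hr"
    using assms by (cases a; cases h) auto
  have "0 \<le> ar" "0 \<le> hr"
    using ar hr norm_ge_zero[of x] norm_ge_zero[of v] by linarith+
  then have esqrt_sum_eq: "esqrt_sum a h = ereal (sqrt (ar\<^sup>2 + hr\<^sup>2))"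
    using ar hr by (simp add: esqrt_sum_def max_def)
  have "(norm x)\<^sup>2 + (norm v)\<^sup>2 < hr\<^sup>2 + ar\<^sup>2"
    using ar hr by (intro add_less_le_mono power_strict_mono power_mono) auto
  then show ?thesis
    using esqrt_sum_eq by (simp add: norm_Pair add.commute)
qed

lemma feedback_image_eball0_subset:
  assumes "Om \<subseteq> X" "u ` Om \<subseteq> U"
    and bound: "\<And>x. x \<in> Om \<Longrightarrow> ereal (norm x) < h \<Longrightarrow> ereal (norm (u x)) \<le> a"
  shows "(\<lambda>x. f (x, u x)) ` eball0 Om h \<subseteq> f ` eball0 (X \<times> U) (esqrt_sum a h)"
proof -
  have "(x, u x) \<in> eball0 (X \<times> U) (esqrt_sum a h)" if "x \<in> eball0 Om h" for x
    using that assms norm_Pair_less_esqrt_sum by (fastforce simp: eball0_def)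
  then show ?thesis
    by blast
qed

lemma ereal_le_inradius_image_eball0:
  fixes F g :: "'a::{real_normed_vector, perfect_space} \<Rightarrow> 'a"
  assumes "homeomorphism W V F g" "open W" "W \<subseteq> Om" "open V" "0 \<le> r" "ball 0 r \<subseteq> V"
  shows "ereal r \<le> inradius 0 (F ` eball0 Om (SUP y \<in> ball 0 r \<inter> V. ereal (norm (g y))))"
proof (rule ereal_le_inradius)
  have "ball 0 r \<subseteq> ball 0 r \<inter> V"
    using assms(6) by blast
  also have "\<dots> \<subseteq> F ` eball0 Om (SUP y \<in> ball 0 r \<inter> V. ereal (norm (g y)))"
    using assms(1-4) by (intro open_subset_image_eball0_SUP_norm) auto
  finally show "ball 0 r \<subseteq> F ` eball0 Om (SUP y \<in> ball 0 r \<inter> V. ereal (norm (g y)))" .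
qed (use assms(5) in simp)

lemma inradius_feedback_image_le:
  fixes f :: "'a::real_normed_vector \<times> 'b::real_normed_vector \<Rightarrow> 'c::real_normed_vector"
  assumes "Om \<subseteq> X" "u ` Om \<subseteq> U" "h \<le> ereal c"
    and bound: "\<And>x. norm x < c \<Longrightarrow> x \<in> D \<and> norm (u x) \<le> d x"
  shows "inradius 0 ((\<lambda>x. f (x, u x)) ` eball0 Om h)
    \<le> inradius 0 (f ` eball0 (X \<times> U) (esqrt_sum (SUP x \<in> eball0 D h. ereal (d x)) h))"
proof (intro inradius_mono feedback_image_eball0_subset assms(1,2))
  fix x :: 'a assume "ereal (norm x) < h"
  moreover from this have "ereal (norm x) < ereal c"
    using \<open>h \<le> ereal c\<close> by (rule less_le_trans)
  ultimately have "x \<in> eball0 D h" "norm (u x) \<le> d x"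
    using bound unfolding eball0_def by auto
  then have "ereal (norm (u x)) \<le> ereal (d x)" "ereal (d x) \<le> (SUP x \<in> eball0 D h. ereal (d x))"
    by (auto intro: SUP_upper)
  then show "ereal (norm (u x)) \<le> (SUP x \<in> eball0 D h. ereal (d x))"
    by (rule order_trans)
qed

lemma eventually_ball_subset_at_right:
  assumes "open S" "z \<in> S"
  shows "eventually (\<lambda>r. ball z r \<subseteq> S) (at_right 0)"
proof -
  obtain e where "e > 0" "ball z e \<subseteq> S"
    using assms open_contains_ball by blast
  then show ?thesis
    unfolding eventually_at_right[OF \<open>e > 0\<close>] by (meson less_imp_le order_trans subset_ball)
qed

lemma eventually_SUP_norm_ball_le:
  assumes "continuous_on V g" "open V" "0 \<in> V" "g 0 = 0" "c > 0"
  shows "eventually (\<lambda>r. 0 < r \<and> ball 0 r \<subseteq> V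
      \<and> (SUP y \<in> ball 0 r \<inter> V. ereal (norm (g y))) \<le> ereal c) (at_right 0)"
proof -
  have "open (g -` ball 0 c \<inter> V)"
    using assms(1,2) continuous_on_open_vimage open_ball by blast
  moreover have "0 \<in> g -` ball 0 c \<inter> V"
    using assms(3-5) by simp
  ultimately have "eventually (\<lambda>r. ball 0 r \<subseteq> g -` ball 0 c \<inter> V) (at_right 0)"
    by (rule eventually_ball_subset_at_right)
  moreover have "eventually (\<lambda>r. 0 < r) (at_right (0::real))"
    by (rule eventually_at_right_less)
  ultimately show ?thesis
    by eventually_elim (auto intro!: SUP_least)
qed

theorem theorem6:
  fixes f :: "'a::euclidean_space \<times> 'b::euclidean_space \<Rightarrow> 'a"
    and X :: "'a set" and U :: "'b set"
    and d :: "'a \<Rightarrow> real" and D :: "'a set"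
    and u :: "'a \<Rightarrow> 'b" and Om :: "'a set"
    and W V :: "'a set" and g :: "'a \<Rightarrow> 'a"
  assumes "open X" "0 \<in> X" "open U" "0 \<in> U"
    and "continuous_on (X \<times> U) f" "f (0, 0) = 0"
    and "open D" "0 \<in> D" "\<forall>x\<in>D. d x \<ge> 0"
    and "stabilizing_feedback f X U Om u"
    and "\<exists>\<epsilon>>0. \<forall>x\<in>ball 0 \<epsilon>. norm (u x) \<le> d x"
    and "open W" "0 \<in> W" "W \<subseteq> Om" "open V" "0 \<in> V"
    and "homeomorphism W V (\<lambda>x. f (x, u x)) g"
  shows "eventually (\<lambda>r.
      let h = (SUP y \<in> ball 0 r \<inter> V. ereal (norm (g y)));
          dn = (SUP x \<in> eball0 D h. ereal (d x));
          gf = (\<lambda>R. inradius 0 (f ` eball0 (X \<times> U) R));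
          gFu = (\<lambda>R. inradius 0 ((\<lambda>x. f (x, u x)) ` eball0 Om R))
      in gFu h \<le> gf (esqrt_sum dn h) \<and> ereal r \<le> gFu h \<and> ereal r \<le> gf (esqrt_sum dn h))
    (at_right 0)"
proof -
  have feedback: "Om \<subseteq> X" "u ` Om \<subseteq> U" "u 0 = 0"
    using assms(10) unfolding stabilizing_feedback_def by auto
  have "g 0 = 0"
    using assms(6,13,17) feedback(3) unfolding homeomorphism_def by force
  obtain \<epsilon> where "\<epsilon> > 0" and u_le_d: "\<forall>x\<in>ball 0 \<epsilon>. norm (u x) \<le> d x"
    using assms(11) by blast
  have "open (D \<inter> ball 0 \<epsilon>)" "0 \<in> D \<inter> ball 0 \<epsilon>"
    using assms(7,8) \<open>\<epsilon> > 0\<close> by auto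
  then obtain c where "c > 0" "ball 0 c \<subseteq> D \<inter> ball 0 \<epsilon>"
    using open_contains_ball by blast
  then have bound: "\<And>x. norm x < c \<Longrightarrow> x \<in> D \<and> norm (u x) \<le> d x"
    using u_le_d by (auto simp: subset_iff)
  have "continuous_on V g"
    using assms(17) by (simp add: homeomorphism_def)
  then have "eventually (\<lambda>r. 0 < r \<and> ball 0 r \<subseteq> V
      \<and> (SUP y \<in> ball 0 r \<inter> V. ereal (norm (g y))) \<le> ereal c) (at_right 0)"
    using assms(15,16) \<open>g 0 = 0\<close> \<open>c > 0\<close> by (rule eventually_SUP_norm_ball_le)
  then show ?thesis
  proof eventually_elim
    case (elim r)
    note gFu_le_gf =
      inradius_feedback_image_le[where f = f, OF feedback(1,2) elim[THEN conjunct2, THEN conjunct2] bound]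
    have r_le_gFu: "ereal r \<le> inradius 0 ((\<lambda>x. f (x, u x)) ` eball0 Om
        (SUP y \<in> ball 0 r \<inter> V. ereal (norm (g y))))"
      using elim by (intro ereal_le_inradius_image_eball0[OF assms(17,12,14,15)]) auto
    show ?case
      unfolding Let_def using gFu_le_gf r_le_gFu order_trans[OF r_le_gFu gFu_le_gf] by blast
  qed
qed

end
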